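(* $\mathcal D=\Phi^{-1}(\mathbf 1)^+$, where $\Phi^{-1}(\mathbf 1)^+$ is the set of $p\times p$ diagonal matrices $D$ with $D_{ii}>0$ for all $i$ and $\Phi\big((D_{ii})_{i=1}^p\big)=\mathbf 1\in\mathbb{R}^q$.
   Context: Let $\mathcal G=(V,E)$ be a finite directed acyclic graph. Input neurons $N_{\mathrm{in}}$ have no incoming edges, output neurons $N_{\mathrm{out}}$ no outgoing edges, hidden neurons $\mathcal H=V\setminus(N_{\mathrm{in}}\cup N_{\mathrm{out}})$. The parameter vector $\theta\in\mathbb{R}^p$ consists of one weight $\theta_{u\to v}$ per edge $(u,v)\in E$ and one bias $b_v$ per non-input neuron $v$. For $v\in\mathcal H$, $\mathrm{in}_v$ is the set of indices of $b_v$ and of the weights $\theta_{u\to v}$, and $\mathrm{out}_v$ the set of indices of the weights $\theta_{v\to u}$. For $v\in\mathcal H$, $\lambda>0$, $D_{\lambda,v}$ is the diagonal $p\times p$ matrix with entry $\lambda$ on $\mathrm{in}_v$, $1/\lambda$ on $\mathrm{out}_v$, $1$ elsewhere; $\mathcal D$ is the group generated by all $D_{\lambda,v}$. A path is a sequence of neurons $v_0\to\cdots\to v_d$ ($d\ge0$) whose consecutive pairs are edges, with $v_d\in N_{\mathrm{out}}$ (for $d=0$, $v_0\notin N_{\mathrm{in}}$); $\mathrm P$ is the set of paths, $q=|\mathrm P|$. The path-lifting $\Phi:\mathbb{R}^p\to\mathbb{R}^q$ is $\Phi_{\mathrm p}(\theta)=\prod_{\ell=1}^d\theta_{v_{\ell-1}\to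 v_\ell}$ if $v_0\in N_{\mathrm{in}}$ and $\Phi_{\mathrm p}(\theta)=b_{v_0}\prod_{\ell=1}^d\theta_{v_{\ell-1}\to v_\ell}$ otherwise (empty product $=1$). For a diagonal matrix $D$, $\Phi(D)$ means $\Phi$ applied to the vector of its diagonal entries. *)

theory Defs
  imports Complex_Main
begin

text \<open>Indices of the parameter vector: one weight per edge, one bias per neuron.\<close>
datatype 'v pidx = Wt 'v 'v | Bs 'v

definition Nin :: "'v set \<Rightarrow> ('v \<times> 'v) set \<Rightarrow> 'v set" where
  "Nin V E = {v \<in> V. \<forall>u. (u, v) \<notin> E}"

definition Nout :: "'v set \<Rightarrow> ('v \<times> 'v) set \<Rightarrow> 'v set" where
  "Nout V E = {v \<in> V. \<forall>u. (v, u) \<notin> E}"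

definition hidden :: "'v set \<Rightarrow> ('v \<times> 'v) set \<Rightarrow> 'v set" where
  "hidden V E = V - (Nin V E \<union> Nout V E)"

text \<open>The index set of the parameter vector theta (of size p).\<close>
definition params :: "'v set \<Rightarrow> ('v \<times> 'v) set \<Rightarrow> 'v pidx set" where
  "params V E = {Wt u v | u v. (u, v) \<in> E} \<union> {Bs v | v. v \<in> V - Nin V E}"

definition in_idx :: "('v \<times> 'v) set \<Rightarrow> 'v \<Rightarrow> 'v pidx set" where
  "in_idx E v = {Bs v} \<union> {Wt u v | u. (u, v) \<in> E}"

definition out_idx :: "('v \<times> 'v) set \<Rightarrow> 'v \<Rightarrow> 'v pidx set" where
  "out_idx E v = {Wt v u | u. (v, u) \<in> E}"

text \<open>Diagonal p x p matrices are represented by their diagonal, a function on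
  parameter indices (value 1 off the parameter index set).  D_{lambda,v}:\<close>
definition resc :: "('v \<times> 'v) set \<Rightarrow> real \<Rightarrow> 'v \<Rightarrow> 'v pidx \<Rightarrow> real" where
  "resc E lam v = (\<lambda>i. if i \<in> in_idx E v then lam
                        else if i \<in> out_idx E v then 1 / lam else 1)"

inductive_set rescaling_group :: "'v set \<Rightarrow> ('v \<times> 'v) set \<Rightarrow> ('v pidx \<Rightarrow> real) set"
  for V E where
  gen: "v \<in> hidden V E \<Longrightarrow> lam > 0 \<Longrightarrow> resc E lam v \<in> rescaling_group V E"
| one: "(\<lambda>_. 1) \<in> rescaling_group V E"
| mult: "d \<in> rescaling_group V E \<Longrightarrow> d' \<in> rescaling_group V E
          \<Longrightarrow> (\<lambda>i. d i * d' i) \<in> rescaling_group V E"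
| inv: "d \<in> rescaling_group V E \<Longrightarrow> (\<lambda>i. inverse (d i)) \<in> rescaling_group V E"

definition paths :: "'v set \<Rightarrow> ('v \<times> 'v) set \<Rightarrow> 'v list set" where
  "paths V E = {vs. vs \<noteq> [] \<and> set vs \<subseteq> V
      \<and> (\<forall>i. Suc i < length vs \<longrightarrow> (vs ! i, vs ! Suc i) \<in> E)
      \<and> last vs \<in> Nout V E
      \<and> (length vs = 1 \<longrightarrow> hd vs \<notin> Nin V E)}"

definition path_lift :: "'v set \<Rightarrow> ('v \<times> 'v) set \<Rightarrow> ('v pidx \<Rightarrow> real) \<Rightarrow> 'v list \<Rightarrow> real" where
  "path_lift V E \<theta> vs =
     (if hd vs \<in> Nin V E then 1 else \<theta> (Bs (hd vs)))
     * (\<Prod>i<length vs - 1. \<theta> (Wt (vs ! i) (vs ! Suc i)))"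

definition pos_fiber_one :: "'v set \<Rightarrow> ('v \<times> 'v) set \<Rightarrow> ('v pidx \<Rightarrow> real) set" where
  "pos_fiber_one V E = {d. (\<forall>i \<in> params V E. d i > 0)
      \<and> (\<forall>i. i \<notin> params V E \<longrightarrow> d i = 1)
      \<and> (\<forall>vs \<in> paths V E. path_lift V E d vs = 1)}"

end

theory Submission
  imports Defs
begin

text \<open>Both sets are the image of the positive vertex scalings \<open>g\<close> that are trivial outside the
  hidden neurons, under \<open>g \<mapsto> D\<^sub>g\<close> with \<open>b\<^sub>v \<mapsto> g v\<close> and \<open>\<theta>\<^sub>u\<^sub>\<rightarrow>\<^sub>v \<mapsto> g v / g u\<close>.
  Each generator \<open>D\<^sub>\<lambda>\<^sub>,\<^sub>v\<close> is such a \<open>D\<^sub>g\<close>, and \<open>g \<mapsto> D\<^sub>g\<close> is multiplicative, so the group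
  is this image.  Along a path the weights of \<open>D\<^sub>g\<close> telescope to \<open>g(v\<^sub>d) / g(v\<^sub>0)\<close>, which the
  first factor cancels, so \<open>\<Phi>(D\<^sub>g) = \<one>\<close>.  Conversely, if \<open>\<Phi>(D) = \<one>\<close>, let \<open>g\<close> be the hidden
  biases of \<open>D\<close>; for an edge \<open>u \<rightarrow> v\<close> continue \<open>v\<close> to an output by some path \<open>p\<close> (the graph
  is finite and acyclic) and compare \<open>\<Phi>\<^sub>p(D) = 1\<close> with \<open>\<Phi>\<^sub>u\<^sub>\<rightarrow>\<^sub>p(D) = 1\<close> to get
  \<open>D\<^sub>u\<^sub>\<rightarrow>\<^sub>v = g v / g u\<close>.\<close>

definition vertex_rescaling :: "'v set \<Rightarrow> ('v \<times> 'v) set \<Rightarrow> ('v \<Rightarrow> real) \<Rightarrow> 'v pidx \<Rightarrow> real"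
  where "vertex_rescaling V E g i =
    (if i \<in> params V E then (case i of Bs v \<Rightarrow> g v | Wt u v \<Rightarrow> g v / g u) else 1)"

definition hidden_scalings :: "'v set \<Rightarrow> ('v \<times> 'v) set \<Rightarrow> ('v \<Rightarrow> real) set"
  where "hidden_scalings V E = {g. (\<forall>w. 0 < g w) \<and> (\<forall>w. w \<notin> hidden V E \<longrightarrow> g w = 1)}"

definition path_weight :: "('v pidx \<Rightarrow> real) \<Rightarrow> 'v list \<Rightarrow> real"
  where "path_weight \<theta> vs = (\<Prod>i<length vs - 1. \<theta> (Wt (vs ! i) (vs ! Suc i)))"

lemma path_lift_eq_path_weight:
  "path_lift V E \<theta> vs = (if hd vs \<in> Nin V E then 1 else \<theta> (Bs (hd vs))) * path_weight \<theta> vs"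
  by (simp add: path_lift_def path_weight_def)

lemma path_weight_Cons:
  assumes "ws \<noteq> []"
  shows "path_weight \<theta> (u # ws) = \<theta> (Wt u (hd ws)) * path_weight \<theta> ws"
proof -
  have len: "length (u # ws) - 1 = Suc (length ws - 1)"
    using assms by simp
  show ?thesis
    unfolding path_weight_def len prod.lessThan_Suc_shift using assms by (simp add: hd_conv_nth)
qed

lemma resc_eq_vertex_rescaling:
  assumes "v \<in> hidden V E" and "irrefl E"
  shows "resc E lam v = vertex_rescaling V E (\<lambda>w. if w = v then lam else 1)"
proof
  fix i
  show "resc E lam v i = vertex_rescaling V E (\<lambda>w. if w = v then lam else 1) i"
    using assms
    by (cases i) (auto simp: resc_def vertex_rescaling_def in_idx_def out_idx_def params_def
        hidden_def irrefl_def)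
qed

lemma vertex_rescaling_mult:
  "vertex_rescaling V E (\<lambda>w. g w * h w) = (\<lambda>i. vertex_rescaling V E g i * vertex_rescaling V E h i)"
  by (rule ext) (auto simp: vertex_rescaling_def split: pidx.splits)

lemma vertex_rescaling_inverse:
  "vertex_rescaling V E (\<lambda>w. inverse (g w)) = (\<lambda>i. inverse (vertex_rescaling V E g i))"
  by (rule ext) (auto simp: vertex_rescaling_def field_simps split: pidx.splits)

lemma vertex_rescaling_one: "vertex_rescaling V E (\<lambda>w. 1) = (\<lambda>i. 1)"
  by (rule ext) (auto simp: vertex_rescaling_def split: pidx.splits)

lemma rescaling_group_subset_vertex_rescalings:
  assumes "irrefl E"
  shows "rescaling_group V E \<subseteq> vertex_rescaling V E ` hidden_scalings V E"
proof
  fix d assume "d \<in> rescaling_group V E"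
  then show "d \<in> vertex_rescaling V E ` hidden_scalings V E"
  proof induction
    case (gen v lam)
    then show ?case
      using resc_eq_vertex_rescaling[OF gen(1) assms]
      by (intro image_eqI[of _ _ "\<lambda>w. if w = v then lam else 1"]) (auto simp: hidden_scalings_def)
  next
    case one
    show ?case
      by (intro image_eqI[of _ _ "\<lambda>w. 1"]) (auto simp: hidden_scalings_def vertex_rescaling_one)
  next
    case (mult d d')
    then obtain g g' where "g \<in> hidden_scalings V E" "d = vertex_rescaling V E g"
      and "g' \<in> hidden_scalings V E" "d' = vertex_rescaling V E g'"
      by blast
    then show ?case
      by (intro image_eqI[of _ _ "\<lambda>w. g w * g' w"])
        (auto simp: hidden_scalings_def vertex_rescaling_mult)
  next
    case (inv d)
    then obtain g where "g \<in> hidden_scalings V E" "d = vertex_rescaling V E g"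
      by blast
    then show ?case
      by (intro image_eqI[of _ _ "\<lambda>w. inverse (g w)"])
        (auto simp: hidden_scalings_def vertex_rescaling_inverse)
  qed
qed

lemma vertex_rescaling_in_rescaling_group:
  assumes "finite (hidden V E)" and "irrefl E" and "g \<in> hidden_scalings V E"
  shows "vertex_rescaling V E g \<in> rescaling_group V E"
proof -
  have pos: "\<And>w. 0 < g w"
    using assms(3) by (simp add: hidden_scalings_def)
  have "vertex_rescaling V E (\<lambda>w. if w \<in> F then g w else 1) \<in> rescaling_group V E"
    if "finite F" "F \<subseteq> hidden V E" for F
    using that
  proof (induction F rule: finite_induct)
    case empty
    then show ?case
      by (simp add: vertex_rescaling_one rescaling_group.one)
  next
    case (insert v F)
    have split: "(\<lambda>w. if w \<in> insert v F then g w else 1)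
        = (\<lambda>w. (if w \<in> F then g w else 1) * (if w = v then g v else 1))"
      using insert(2) by auto
    have "v \<in> hidden V E"
      using insert(4) by simp
    then have "resc E (g v) v \<in> rescaling_group V E"
      using pos by (intro rescaling_group.gen)
    then have "vertex_rescaling V E (\<lambda>w. if w = v then g v else 1) \<in> rescaling_group V E"
      by (simp add: resc_eq_vertex_rescaling[OF \<open>v \<in> hidden V E\<close> assms(2)])
    then show ?case
      unfolding split vertex_rescaling_mult using insert
      by (intro rescaling_group.mult) auto
  qed
  moreover have "(\<lambda>w. if w \<in> hidden V E then g w else 1) = g"
    using assms(3) by (auto simp: hidden_scalings_def)
  ultimately show ?thesis
    using assms(1) by force
qed

lemma rescaling_group_eq_vertex_rescalings:
  assumes "finite V" and "irrefl E"
  shows "rescaling_group V E = vertex_rescaling V E ` hidden_scalings V E"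
proof
  show "rescaling_group V E \<subseteq> vertex_rescaling V E ` hidden_scalings V E"
    using assms(2) by (rule rescaling_group_subset_vertex_rescalings)
  have "finite (hidden V E)"
    using assms(1) by (simp add: hidden_def)
  then show "vertex_rescaling V E ` hidden_scalings V E \<subseteq> rescaling_group V E"
    using assms(2) vertex_rescaling_in_rescaling_group by blast
qed

lemma Cons_in_paths:
  assumes "ws \<in> paths V E" and "u \<in> V" and "(u, hd ws) \<in> E"
  shows "u # ws \<in> paths V E"
proof -
  have "((u # ws) ! i, (u # ws) ! Suc i) \<in> E" if "Suc i < length (u # ws)" for i
    using assms that by (cases i) (auto simp: paths_def hd_conv_nth)
  then show ?thesis
    using assms by (auto simp: paths_def)
qed

lemma path_from_non_input:
  assumes "finite V" and "E \<subseteq> V \<times> V" and "acyclic E" and "v \<in> V" and "v \<notin> Nin V E"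
  shows "\<exists>ws \<in> paths V E. hd ws = v"
proof -
  have "finite E"
    using assms(1,2) by (meson finite_SigmaI finite_subset)
  then have "wf (E\<inverse>)"
    using assms(3) by (rule finite_acyclic_wf_converse)
  then show ?thesis
    using assms(4,5)
  proof (induction v rule: wf_induct_rule)
    case (less v)
    show ?case
    proof (cases "v \<in> Nout V E")
      case True
      then show ?thesis
        using less.prems by (intro bexI[of _ "[v]"]) (auto simp: paths_def)
    next
      case False
      then obtain w where "(v, w) \<in> E"
        using less.prems(1) by (auto simp: Nout_def)
      moreover have "w \<in> V" "w \<notin> Nin V E"
        using \<open>(v, w) \<in> E\<close> assms(2) by (auto simp: Nin_def)
      ultimately obtain ws where ws: "ws \<in> paths V E" "hd ws = w"
        using less.IH[of w] by auto
      then have "v # ws \<in> paths V E"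
        using Cons_in_paths[OF ws(1) less.prems(1)] \<open>(v, w) \<in> E\<close> by simp
      then show ?thesis
        by (intro bexI[of _ "v # ws"]) simp_all
    qed
  qed
qed

lemma path_weight_vertex_rescaling:
  assumes "vs \<in> paths V E" and "\<And>w. g w \<noteq> 0"
  shows "path_weight (vertex_rescaling V E g) vs = g (last vs) / g (hd vs)"
proof -
  have "path_weight (vertex_rescaling V E g) vs = (\<Prod>i<length vs - 1. g (vs ! Suc i) / g (vs ! i))"
    unfolding path_weight_def
  proof (rule prod.cong)
    fix i assume "i \<in> {..<length vs - 1}"
    then have "(vs ! i, vs ! Suc i) \<in> E"
      using assms(1) by (auto simp: paths_def)
    then show "vertex_rescaling V E g (Wt (vs ! i) (vs ! Suc i)) = g (vs ! Suc i) / g (vs ! i)"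
      by (auto simp: vertex_rescaling_def params_def)
  qed simp
  also have "\<dots> = g (vs ! (length vs - 1)) / g (vs ! 0)"
    using assms(2) by (rule prod_lessThan_telescope)
  also have "\<dots> = g (last vs) / g (hd vs)"
    using assms(1) by (simp add: paths_def hd_conv_nth last_conv_nth)
  finally show ?thesis .
qed

lemma vertex_rescaling_in_pos_fiber_one:
  assumes "g \<in> hidden_scalings V E"
  shows "vertex_rescaling V E g \<in> pos_fiber_one V E"
proof -
  have pos: "\<And>w. 0 < g w" and trivial: "\<And>w. w \<notin> hidden V E \<Longrightarrow> g w = 1"
    using assms by (auto simp: hidden_scalings_def)
  have "path_lift V E (vertex_rescaling V E g) vs = 1" if vs: "vs \<in> paths V E" for vs
  proof -
    have "hd vs \<in> V" "last vs \<in> Nout V E"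
      using vs by (auto simp: paths_def)
    then have "(if hd vs \<in> Nin V E then 1 else vertex_rescaling V E g (Bs (hd vs))) = g (hd vs)"
      and "g (last vs) = 1"
      using trivial by (auto simp: vertex_rescaling_def params_def hidden_def)
    moreover have "path_weight (vertex_rescaling V E g) vs = g (last vs) / g (hd vs)"
      using vs pos by (intro path_weight_vertex_rescaling) (auto simp: less_le)
    ultimately show ?thesis
      using pos[of "hd vs"] by (simp add: path_lift_eq_path_weight)
  qed
  then show ?thesis
    using pos by (auto simp: pos_fiber_one_def vertex_rescaling_def split: pidx.splits)
qed

definition hidden_biases :: "'v set \<Rightarrow> ('v \<times> 'v) set \<Rightarrow> ('v pidx \<Rightarrow> real) \<Rightarrow> 'v \<Rightarrow> real"
  where "hidden_biases V E \<theta> = (\<lambda>w. if w \<in> hidden V E then \<theta> (Bs w) else 1)"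

lemma hidden_biases_in_hidden_scalings:
  assumes "d \<in> pos_fiber_one V E"
  shows "hidden_biases V E d \<in> hidden_scalings V E"
proof -
  have "0 < d (Bs w)" if "w \<in> hidden V E" for w
  proof -
    have "Bs w \<in> params V E"
      using that by (auto simp: hidden_def params_def)
    then show ?thesis
      using assms by (simp add: pos_fiber_one_def)
  qed
  then show ?thesis
    by (simp add: hidden_scalings_def hidden_biases_def)
qed

text \<open>For an output neuron \<open>w\<close> this is \<open>\<Phi>\<^sub>p(D) = 1\<close> for the path \<open>p = w\<close> of length 0.\<close>
lemma pos_fiber_one_source_factor:
  assumes "d \<in> pos_fiber_one V E" and "w \<in> V"
  shows "(if w \<in> Nin V E then 1 else d (Bs w)) = hidden_biases V E d w"
proof (cases "w \<in> Nout V E - Nin V E")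
  case True
  then have "[w] \<in> paths V E"
    using assms(2) by (auto simp: paths_def)
  then have "path_lift V E d [w] = 1"
    using assms(1) by (auto simp: pos_fiber_one_def)
  then show ?thesis
    using True by (simp add: path_lift_def hidden_biases_def hidden_def)
next
  case False
  then show ?thesis
    using assms(2) by (auto simp: hidden_biases_def hidden_def)
qed

lemma pos_fiber_one_weight:
  assumes "finite V" and "E \<subseteq> V \<times> V" and "acyclic E"
    and "d \<in> pos_fiber_one V E" and "(u, v) \<in> E"
  shows "d (Wt u v) = hidden_biases V E d v / hidden_biases V E d u"
proof -
  let ?g = "hidden_biases V E d"
  have "u \<in> V" "v \<in> V" "v \<notin> Nin V E"
    using assms(2,5) by (auto simp: Nin_def)
  then obtain ws where ws: "ws \<in> paths V E" "hd ws = v"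
    using path_from_non_input[OF assms(1-3)] by blast
  then have uws: "u # ws \<in> paths V E"
    using Cons_in_paths[OF ws(1) \<open>u \<in> V\<close>] assms(5) by simp
  have "ws \<noteq> []"
    using ws(1) by (simp add: paths_def)
  have lift: "path_lift V E d vs = 1" if "vs \<in> paths V E" for vs
    using assms(4) that by (simp add: pos_fiber_one_def)
  have pos: "0 < ?g u" "0 < ?g v"
    using hidden_biases_in_hidden_scalings[OF assms(4)] by (simp_all add: hidden_scalings_def)
  have "?g v * path_weight d ws = 1"
    using lift[OF ws(1)] pos_fiber_one_source_factor[OF assms(4) \<open>v \<in> V\<close>]
    unfolding path_lift_eq_path_weight ws(2) by simp
  then have weight_ws: "path_weight d ws = 1 / ?g v"
    using pos(2) by (simp add: field_simps)
  have "?g u * (d (Wt u v) * path_weight d ws) = 1"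
    using lift[OF uws] pos_fiber_one_source_factor[OF assms(4) \<open>u \<in> V\<close>]
    unfolding path_lift_eq_path_weight path_weight_Cons[OF \<open>ws \<noteq> []\<close>] list.sel(1) ws(2)
    by simp
  then show ?thesis
    using pos unfolding weight_ws by (simp add: field_simps)
qed

lemma pos_fiber_one_eq_vertex_rescaling:
  assumes "finite V" and "E \<subseteq> V \<times> V" and "acyclic E" and "d \<in> pos_fiber_one V E"
  shows "d = vertex_rescaling V E (hidden_biases V E d)"
proof
  fix i
  show "d i = vertex_rescaling V E (hidden_biases V E d) i"
  proof (cases "i \<in> params V E")
    case False
    then show ?thesis
      using assms(4) by (simp add: pos_fiber_one_def vertex_rescaling_def)
  next
    case True
    then consider u v where "i = Wt u v" "(u, v) \<in> E" | w where "i = Bs w" "w \<in> V - Nin V E"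
      by (auto simp: params_def)
    then show ?thesis
    proof cases
      case 1
      then show ?thesis
        using True pos_fiber_one_weight[OF assms] by (simp add: vertex_rescaling_def)
    next
      case 2
      then show ?thesis
        using True pos_fiber_one_source_factor[OF assms(4), of w] by (simp add: vertex_rescaling_def)
    qed
  qed
qed

lemma pos_fiber_one_eq_vertex_rescalings:
  assumes "finite V" and "E \<subseteq> V \<times> V" and "acyclic E"
  shows "pos_fiber_one V E = vertex_rescaling V E ` hidden_scalings V E"
  using pos_fiber_one_eq_vertex_rescaling[OF assms] hidden_biases_in_hidden_scalings
    vertex_rescaling_in_pos_fiber_one
  by blast

theorem lemmaD7:
  fixes V :: "'v set" and E :: "('v \<times> 'v) set"
  assumes "finite V" and "E \<subseteq> V \<times> V" and "acyclic E"
  shows "rescaling_group V E = pos_fiber_one V E"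
proof -
  have "irrefl E"
    using assms(3) unfolding acyclic_def irrefl_def by blast
  then show ?thesis
    using rescaling_group_eq_vertex_rescalings[OF assms(1)] pos_fiber_one_eq_vertex_rescalings[OF assms]
    by simp
qed

end
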